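(* Let $\Sigma$ be a $p\times p$ positive definite correlation matrix ($\Sigma_{jj}=1$), let $\beta\in\mathbb{R}^p$, $\sigma>0$, $\nu\ge0$, $n\ge1$, $\mu_n=\sqrt{2\log p/n}$, and let $S=\{j:|\beta_j|>\sigma\nu\mu_n\}$, $k=|S|$, $S^c=\{1,\dots,p\}\setminus S$. Let $\bar k\ge1$ be an integer with $k\le\bar k$. Suppose $\gamma(\Sigma):=\max_{j\neq j'}|\Sigma_{jj'}|\le\omega_0/(2\bar k)$ for some $0\le\omega_0<1$, and $\|\beta_{S^c}\|_1\le\sigma\eta\mu_n$ for some $\eta\ge0$; put $\bar\eta=\eta/\bar k$. Then, if $1\le k\le\bar k$: (a) for every $T\subseteq\{1,\dots,p\}$ with $|T|=k$, $\lambda_{min}(\Sigma_{TT})\ge1-\omega_0/2$ and $\lambda_{max}(\Sigma_{TT})\le1+\omega_0/2$; (b) for every $T$ with $|T|=k$, $\max_{j\notin T}\|\Sigma_{TT}^{-1}\Sigma_{Tj}\|_1\le\omega_0$; (c) $\|\Sigma_{SS}^{-1}\Sigma_{SS^c}\beta_{S^c}\|_\infty\le\sigma\,\omega_0\bar\eta\,\mu_n$ and $\|\Sigma_{S^c|S}\beta_{S^c}\|_\infty\le\sigma(\nu+\omega_0\bar\eta)\mu_n$, where $\Sigma_{S^c|S}=\Sigma_{S^cS^c}-\Sigma_{S^cS}\Sigma_{SS}^{-1}\Sigma_{SS^c}$. If $k=0$, then $\|\Sigma\beta\|_\infty\le\sigma(\nu+\omega_0\bar\eta)\mu_n$.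
   Context: For index sets $A,A'$, $\Sigma_{AA'}$ is the submatrix with rows in $A$ and columns in $A'$, $\beta_A$ is the subvector indexed by $A$; $\lambda_{min}(\cdot),\lambda_{max}(\cdot)$ denote the smallest and largest eigenvalues of a symmetric matrix. *)

theory Defs
  imports "Jordan_Normal_Form.Matrix" "Jordan_Normal_Form.Char_Poly" "Jordan_Normal_Form.DL_Submatrix"
begin

(* Indices are 0..p-1 (the paper's 1..p shifted by one). *)

definition pos_def_mat :: "real mat \<Rightarrow> nat \<Rightarrow> bool" where
  "pos_def_mat A p \<longleftrightarrow> A \<in> carrier_mat p p \<and> A\<^sup>T = A \<and>
     (\<forall>v \<in> carrier_vec p. v \<noteq> 0\<^sub>v p \<longrightarrow> v \<bullet> (A *\<^sub>v v) > 0)"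

(* subvector beta_A, indices of A taken in increasing order (same convention as submatrix) *)
definition subvec :: "'a vec \<Rightarrow> nat set \<Rightarrow> 'a vec" where
  "subvec v A = vec (card {i. i < dim_vec v \<and> i \<in> A}) (\<lambda>i. v $ pick A i)"

definition mat_inv :: "real mat \<Rightarrow> real mat" where
  "mat_inv A = (THE B. B \<in> carrier_mat (dim_row A) (dim_row A) \<and>
                       A * B = 1\<^sub>m (dim_row A) \<and> B * A = 1\<^sub>m (dim_row A))"

definition lambda_min :: "real mat \<Rightarrow> real" where
  "lambda_min A = Min {x. eigenvalue A x}"

definition lambda_max :: "real mat \<Rightarrow> real" where
  "lambda_max A = Max {x. eigenvalue A x}"

definition norm1_vec :: "real vec \<Rightarrow> real" where
  "norm1_vec v = (\<Sum>i<dim_vec v. \<bar>v $ i\<bar>)"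

(* sup norm; the empty vector has norm 0 *)
definition norminf_vec :: "real vec \<Rightarrow> real" where
  "norminf_vec v = Max (insert 0 ((\<lambda>i. \<bar>v $ i\<bar>) ` {..<dim_vec v}))"

end

(* Write a principal submatrix as Sigma_TT = I + E. Since every off-diagonal entry of Sigma is at
   most gamma, each coordinate of E x is bounded by gamma ||x||_1 <= |T| gamma ||x||_inf, and
   |T| gamma <= omega0/2 whenever |T| <= kbar. This gives Gershgorin's bound |lambda - 1| <= omega0/2
   for the (real, by symmetry) eigenvalues, and (1 - omega0/2) ||x|| <= ||Sigma_TT x|| in both the
   sup norm and the 1-norm, so Sigma_TT^-1 has norm at most 2 in either. Off-diagonal blocks map
   1-norm into sup norm with factor gamma, and combining these bounds with
   ||beta_Sc||_1 <= sigma eta mu_n yields (b), (c) and the case k = 0. *)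

theory Submission
  imports Defs "Jordan_Normal_Form.Spectral_Radius"
begin

lemma norminf_vec_nonneg: "norminf_vec v \<ge> 0"
  unfolding norminf_vec_def by (simp add: Max_ge_iff)

lemma abs_index_le_norminf_vec: "i < dim_vec v \<Longrightarrow> \<bar>v $ i\<bar> \<le> norminf_vec v"
  unfolding norminf_vec_def by (simp add: Max_ge_iff)

lemma norminf_vec_leI:
  "c \<ge> 0 \<Longrightarrow> (\<And>i. i < dim_vec v \<Longrightarrow> \<bar>v $ i\<bar> \<le> c) \<Longrightarrow> norminf_vec v \<le> c"
  unfolding norminf_vec_def by (auto simp add: Max_le_iff)

lemma norminf_vec_attained:
  assumes "dim_vec v > 0"
  obtains i where "i < dim_vec v" "norminf_vec v = \<bar>v $ i\<bar>"
proof -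
  have "norminf_vec v \<in> insert 0 ((\<lambda>i. \<bar>v $ i\<bar>) ` {..<dim_vec v})"
    unfolding norminf_vec_def by (rule Max_in) auto
  then consider "norminf_vec v = 0" | i where "i < dim_vec v" "norminf_vec v = \<bar>v $ i\<bar>"
    by blast
  thus ?thesis
  proof cases
    case 1
    hence "norminf_vec v = \<bar>v $ 0\<bar>"
      using abs_index_le_norminf_vec[of 0 v] assms by simp
    thus ?thesis using that assms by blast
  qed (use that in blast)
qed

lemma norminf_vec_pos:
  assumes v: "v \<in> carrier_vec m" "v \<noteq> 0\<^sub>v m"
  shows "norminf_vec v > 0"
proof -
  obtain j where j: "j < m" "v $ j \<noteq> 0"
    using v by (metis carrier_vecD eq_vecI index_zero_vec)
  hence "0 < \<bar>v $ j\<bar>" by simp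
  also have "\<dots> \<le> norminf_vec v" using abs_index_le_norminf_vec j v by simp
  finally show ?thesis .
qed

lemma norm1_vec_nonneg: "norm1_vec v \<ge> 0"
  unfolding norm1_vec_def by (simp add: sum_nonneg)

lemma norm1_vec_le_norminf_vec: "norm1_vec v \<le> real (dim_vec v) * norminf_vec v"
proof -
  have "norm1_vec v \<le> (\<Sum>i<dim_vec v. norminf_vec v)"
    unfolding norm1_vec_def by (rule sum_mono) (simp add: abs_index_le_norminf_vec)
  thus ?thesis by simp
qed

lemma abs_mult_mat_vec_le:
  fixes B :: "real mat"
  assumes B: "B \<in> carrier_mat r c" and entries: "\<And>i j. i < r \<Longrightarrow> j < c \<Longrightarrow> \<bar>B $$ (i,j)\<bar> \<le> g"
    and w: "w \<in> carrier_vec c" and i: "i < r"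
  shows "\<bar>(B *\<^sub>v w) $ i\<bar> \<le> g * norm1_vec w"
proof -
  have "(B *\<^sub>v w) $ i = (\<Sum>j<c. B $$ (i,j) * w $ j)"
    using B w i by (auto simp: scalar_prod_def lessThan_atLeast0 intro!: sum.cong)
  also have "\<bar>\<dots>\<bar> \<le> (\<Sum>j<c. \<bar>B $$ (i,j)\<bar> * \<bar>w $ j\<bar>)"
    by (rule order_trans[OF sum_abs]) (simp add: abs_mult)
  also have "\<dots> \<le> (\<Sum>j<c. g * \<bar>w $ j\<bar>)"
    by (rule sum_mono) (auto intro!: mult_right_mono entries i)
  finally show ?thesis
    using w by (simp add: norm1_vec_def sum_distrib_left)
qed

lemma norminf_mult_mat_vec_le:
  fixes B :: "real mat"
  assumes B: "B \<in> carrier_mat r c" and entries: "\<And>i j. i < r \<Longrightarrow> j < c \<Longrightarrow> \<bar>B $$ (i,j)\<bar> \<le> g"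
    and g: "0 \<le> g" and w: "w \<in> carrier_vec c"
  shows "norminf_vec (B *\<^sub>v w) \<le> g * norm1_vec w"
  using B g norm1_vec_nonneg[of w] abs_mult_mat_vec_le[OF B entries w]
  by (intro norminf_vec_leI) simp_all

lemma norminf_vec_diff_le:
  assumes "dim_vec v = dim_vec u"
  shows "norminf_vec (u - v) \<le> norminf_vec u + norminf_vec v"
proof (rule norminf_vec_leI)
  show "0 \<le> norminf_vec u + norminf_vec v" using norminf_vec_nonneg[of u] norminf_vec_nonneg[of v] by simp
  fix i assume "i < dim_vec (u - v)"
  hence "i < dim_vec u" "i < dim_vec v" using assms by simp_all
  thus "\<bar>(u - v) $ i\<bar> \<le> norminf_vec u + norminf_vec v"
    using abs_index_le_norminf_vec[of i u] abs_index_le_norminf_vec[of i v] by simp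
qed

section \<open>Matrices with unit diagonal and small off-diagonal entries\<close>

text \<open>\<open>g\<close> bounds the paper's coherence \<open>\<gamma>(M)\<close>.\<close>

definition near_identity_mat :: "real mat \<Rightarrow> nat \<Rightarrow> real \<Rightarrow> bool" where
  "near_identity_mat M m g \<longleftrightarrow> 0 \<le> g \<and> M \<in> carrier_mat m m \<and> (\<forall>i<m. M $$ (i,i) = 1) \<and>
     (\<forall>i<m. \<forall>j<m. i \<noteq> j \<longrightarrow> \<bar>M $$ (i,j)\<bar> \<le> g)"

lemma near_identityD:
  assumes "near_identity_mat M m g"
  shows "0 \<le> g" "M \<in> carrier_mat m m" "\<And>i. i < m \<Longrightarrow> M $$ (i,i) = 1"
    "\<And>i j. i < m \<Longrightarrow> j < m \<Longrightarrow> i \<noteq> j \<Longrightarrow> \<bar>M $$ (i,j)\<bar> \<le> g"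
  using assms unfolding near_identity_mat_def by auto

lemma near_identity_mult_vec_defect:
  assumes M: "near_identity_mat M m g" and x: "x \<in> carrier_vec m" and i: "i < m"
  shows "\<bar>(M *\<^sub>v x) $ i - x $ i\<bar> \<le> g * norm1_vec x"
proof -
  note Mc = near_identityD(2)[OF M]
  have "(M - 1\<^sub>m m) *\<^sub>v x = M *\<^sub>v x - x"
    using minus_mult_distrib_mat_vec[OF Mc one_carrier_mat x] x by simp
  hence eq: "(M *\<^sub>v x) $ i - x $ i = ((M - 1\<^sub>m m) *\<^sub>v x) $ i"
    using Mc x i by simp
  have "\<bar>((M - 1\<^sub>m m) *\<^sub>v x) $ i\<bar> \<le> g * norm1_vec x"
  proof (rule abs_mult_mat_vec_le[of _ m m])
    fix i' j assume "i' < m" "j < m"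
    thus "\<bar>(M - 1\<^sub>m m) $$ (i', j)\<bar> \<le> g"
      using Mc near_identityD[OF M] by (cases "i' = j") simp_all
  qed (use minus_carrier_mat[OF one_carrier_mat] x i in \<open>simp_all\<close>)
  thus ?thesis unfolding eq .
qed

lemma near_identity_norminf_mult_vec_le:
  assumes M: "near_identity_mat M m g" and x: "x \<in> carrier_vec m"
  shows "norminf_vec (M *\<^sub>v x) \<le> norminf_vec x + g * norm1_vec x"
proof (rule norminf_vec_leI)
  show "0 \<le> norminf_vec x + g * norm1_vec x"
    using near_identityD(1)[OF M] norminf_vec_nonneg[of x] norm1_vec_nonneg[of x] by simp
  fix i assume "i < dim_vec (M *\<^sub>v x)"
  hence i: "i < m" using near_identityD(2)[OF M] by simp
  have "\<bar>x $ i\<bar> \<le> norminf_vec x" using abs_index_le_norminf_vec i x by simp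
  thus "\<bar>(M *\<^sub>v x) $ i\<bar> \<le> norminf_vec x + g * norm1_vec x"
    using near_identity_mult_vec_defect[OF M x i] by linarith
qed

lemma near_identity_norminf_le_mult_vec:
  assumes M: "near_identity_mat M m g" and x: "x \<in> carrier_vec m"
  shows "(1 - real m * g) * norminf_vec x \<le> norminf_vec (M *\<^sub>v x)"
proof (cases "m = 0")
  case True
  thus ?thesis using x norminf_vec_nonneg[of "M *\<^sub>v x"] by (simp add: norminf_vec_def)
next
  case False
  then obtain i where i: "i < m" and xi: "norminf_vec x = \<bar>x $ i\<bar>"
    using norminf_vec_attained[of x] x by auto
  have "\<bar>(M *\<^sub>v x) $ i\<bar> \<le> norminf_vec (M *\<^sub>v x)"
    using abs_index_le_norminf_vec[of i "M *\<^sub>v x"] i near_identityD(2)[OF M] by simp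
  moreover have "g * norm1_vec x \<le> real m * g * norminf_vec x"
    using mult_left_mono[OF norm1_vec_le_norminf_vec[of x] near_identityD(1)[OF M]] x
    by (simp add: algebra_simps)
  ultimately show ?thesis
    using near_identity_mult_vec_defect[OF M x i] xi by (simp add: algebra_simps)
qed

lemma near_identity_norm1_le_mult_vec:
  assumes M: "near_identity_mat M m g" and x: "x \<in> carrier_vec m"
  shows "(1 - real m * g) * norm1_vec x \<le> norm1_vec (M *\<^sub>v x)"
proof -
  have "norm1_vec x = (\<Sum>i<m. \<bar>x $ i\<bar>)" using x by (simp add: norm1_vec_def)
  also have "\<dots> \<le> (\<Sum>i<m. \<bar>(M *\<^sub>v x) $ i\<bar> + g * norm1_vec x)"
    by (rule sum_mono) (use near_identity_mult_vec_defect[OF M x] in fastforce)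
  also have "\<dots> = norm1_vec (M *\<^sub>v x) + real m * g * norm1_vec x"
    using near_identityD(2)[OF M] x by (simp add: norm1_vec_def sum.distrib)
  finally show ?thesis by (simp add: algebra_simps)
qed

lemma near_identity_det_nonzero:
  assumes M: "near_identity_mat M m g" and small: "real m * g < 1"
  shows "det M \<noteq> 0"
proof
  assume "det M = 0"
  then obtain v where v: "v \<in> carrier_vec m" "v \<noteq> 0\<^sub>v m" "M *\<^sub>v v = 0\<^sub>v m"
    using det_0_iff_vec_prod_zero[OF near_identityD(2)[OF M]] by auto
  have "norminf_vec (0\<^sub>v m) = 0"
    by (rule antisym[OF norminf_vec_leI norminf_vec_nonneg]) auto
  hence "(1 - real m * g) * norminf_vec v \<le> 0"
    using near_identity_norminf_le_mult_vec[OF M v(1)] v(3) by simp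
  thus False
    using small norminf_vec_pos[OF v(1,2)] by (simp add: mult_le_0_iff)
qed

lemma near_identity_eigenvalue_bound:
  assumes M: "near_identity_mat M m g" and ev: "eigenvalue M c"
  shows "\<bar>c - 1\<bar> \<le> real m * g"
proof -
  obtain v where v: "v \<in> carrier_vec m" "v \<noteq> 0\<^sub>v m" "M *\<^sub>v v = c \<cdot>\<^sub>v v"
    using ev near_identityD(2)[OF M] unfolding eigenvalue_def eigenvector_def by auto
  have "m > 0"
  proof (rule ccontr)
    assume "\<not> m > 0"
    hence "v = 0\<^sub>v m" using v(1) by (intro eq_vecI) auto
    thus False using v(2) by simp
  qed
  then obtain i where i: "i < m" and vi: "norminf_vec v = \<bar>v $ i\<bar>"
    using norminf_vec_attained[of v] v(1) by auto
  have "\<bar>c - 1\<bar> * \<bar>v $ i\<bar> = \<bar>(M *\<^sub>v v) $ i - v $ i\<bar>"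
    using v(1,3) i by (simp add: abs_mult[symmetric] algebra_simps)
  also have "\<dots> \<le> g * norm1_vec v" by (rule near_identity_mult_vec_defect[OF M v(1) i])
  also have "\<dots> \<le> real m * g * \<bar>v $ i\<bar>"
    using mult_left_mono[OF norm1_vec_le_norminf_vec[of v] near_identityD(1)[OF M]] v(1) vi
    by (simp add: algebra_simps)
  finally show ?thesis using norminf_vec_pos[OF v(1,2)] vi by simp
qed

lemma mat_inv_correct:
  fixes M :: "real mat"
  assumes M: "M \<in> carrier_mat m m" and d: "det M \<noteq> 0"
  shows "mat_inv M \<in> carrier_mat m m" "M * mat_inv M = 1\<^sub>m m"
proof -
  obtain B where B: "B \<in> carrier_mat m m" "M * B = 1\<^sub>m m" "B * M = 1\<^sub>m m"
    using det_non_zero_imp_unit[OF M d, of undefined] unfolding Units_def ring_mat_def by auto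
  have "mat_inv M = B" unfolding mat_inv_def carrier_matD(1)[OF M]
  proof (rule the_equality)
    show "B \<in> carrier_mat m m \<and> M * B = 1\<^sub>m m \<and> B * M = 1\<^sub>m m" using B by simp
    fix B' assume B': "B' \<in> carrier_mat m m \<and> M * B' = 1\<^sub>m m \<and> B' * M = 1\<^sub>m m"
    hence B'c: "B' \<in> carrier_mat m m" by simp
    have "B' = B' * (M * B)" using B(2) B'c by simp
    also have "\<dots> = (B' * M) * B" using assoc_mult_mat[OF B'c M B(1)] by simp
    also have "\<dots> = B" using B' B(1) by simp
    finally show "B' = B" .
  qed
  thus "mat_inv M \<in> carrier_mat m m" "M * mat_inv M = 1\<^sub>m m" using B by simp_all
qed

lemma mult_mat_inv_mult_vec:
  fixes M :: "real mat"
  assumes M: "M \<in> carrier_mat m m" and d: "det M \<noteq> 0" and v: "v \<in> carrier_vec m"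
  shows "M *\<^sub>v (mat_inv M *\<^sub>v v) = v"
  using assoc_mult_mat_vec[OF M mat_inv_correct(1)[OF M d] v] mat_inv_correct(2)[OF M d] v
  by simp

lemma near_identity_norminf_mat_inv_mult_vec:
  assumes M: "near_identity_mat M m g" and small: "real m * g \<le> 1/2" and v: "v \<in> carrier_vec m"
  shows "norminf_vec (mat_inv M *\<^sub>v v) \<le> 2 * norminf_vec v"
proof -
  note Mc = near_identityD(2)[OF M]
  have d: "det M \<noteq> 0" using near_identity_det_nonzero[OF M] small by simp
  have "(1 - real m * g) * norminf_vec (mat_inv M *\<^sub>v v) \<le> norminf_vec v"
    using near_identity_norminf_le_mult_vec[OF M, of "mat_inv M *\<^sub>v v"]
      mat_inv_correct(1)[OF Mc d] mult_mat_inv_mult_vec[OF Mc d v] small v by simp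
  moreover have "1/2 * norminf_vec (mat_inv M *\<^sub>v v) \<le> (1 - real m * g) * norminf_vec (mat_inv M *\<^sub>v v)"
    using small norminf_vec_nonneg by (intro mult_right_mono) auto
  ultimately show ?thesis by simp
qed

lemma near_identity_norm1_mat_inv_mult_vec:
  assumes M: "near_identity_mat M m g" and small: "real m * g \<le> 1/2" and v: "v \<in> carrier_vec m"
  shows "norm1_vec (mat_inv M *\<^sub>v v) \<le> 2 * norm1_vec v"
proof -
  note Mc = near_identityD(2)[OF M]
  have d: "det M \<noteq> 0" using near_identity_det_nonzero[OF M] small by simp
  have "(1 - real m * g) * norm1_vec (mat_inv M *\<^sub>v v) \<le> norm1_vec v"
    using near_identity_norm1_le_mult_vec[OF M, of "mat_inv M *\<^sub>v v"]
      mat_inv_correct(1)[OF Mc d] mult_mat_inv_mult_vec[OF Mc d v] small v by simp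
  moreover have "1/2 * norm1_vec (mat_inv M *\<^sub>v v) \<le> (1 - real m * g) * norm1_vec (mat_inv M *\<^sub>v v)"
    using small norm1_vec_nonneg by (intro mult_right_mono) auto
  ultimately show ?thesis by simp
qed

section \<open>Real symmetric matrices have real eigenvalues\<close>

lemma complexified_mult_mat_vec_Re:
  fixes M :: "real mat"
  assumes M: "M \<in> carrier_mat m m" and v: "v \<in> carrier_vec m"
  shows "map_vec Re (map_mat complex_of_real M *\<^sub>v v) = M *\<^sub>v map_vec Re v"
    and "map_vec Im (map_mat complex_of_real M *\<^sub>v v) = M *\<^sub>v map_vec Im v"
  using M v by (auto intro!: eq_vecI simp: scalar_prod_def)

lemma eigenvalue_of_complexified_eigenvalue:
  fixes M :: "real mat"
  assumes M: "M \<in> carrier_mat m m"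
    and ev: "eigenvalue (map_mat complex_of_real M) (complex_of_real r)"
  shows "eigenvalue M r"
proof -
  obtain v where v: "v \<in> carrier_vec m" "v \<noteq> 0\<^sub>v m"
    and eq: "map_mat complex_of_real M *\<^sub>v v = complex_of_real r \<cdot>\<^sub>v v"
    using ev M unfolding eigenvalue_def eigenvector_def by auto
  have re: "M *\<^sub>v map_vec Re v = r \<cdot>\<^sub>v map_vec Re v"
    unfolding complexified_mult_mat_vec_Re(1)[OF M v(1), symmetric] eq by (rule eq_vecI) simp_all
  have im: "M *\<^sub>v map_vec Im v = r \<cdot>\<^sub>v map_vec Im v"
    unfolding complexified_mult_mat_vec_Re(2)[OF M v(1), symmetric] eq by (rule eq_vecI) simp_all
  have "map_vec Re v \<noteq> 0\<^sub>v m \<or> map_vec Im v \<noteq> 0\<^sub>v m"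
  proof (rule ccontr)
    assume "\<not> ?thesis"
    hence "Re (v $ i) = 0 \<and> Im (v $ i) = 0" if "i < m" for i
      using that v(1) by (metis carrier_vecD index_map_vec index_zero_vec(1))
    hence "v = 0\<^sub>v m" using v(1) by (intro eq_vecI) (simp_all add: complex_eq_iff)
    thus False using v(2) by simp
  qed
  moreover have "map_vec Re v \<in> carrier_vec m" "map_vec Im v \<in> carrier_vec m"
    using v(1) by simp_all
  ultimately show ?thesis
    using re im M unfolding eigenvalue_def eigenvector_def by (metis carrier_matD(1))
qed

lemma complexified_symmetric_eigenvalue_real:
  fixes M :: "real mat"
  assumes M: "M \<in> carrier_mat m m" and sym: "M\<^sup>T = M"
    and ev: "eigenvalue (map_mat complex_of_real M) a"
  shows "Im a = 0"
proof -
  obtain v where v: "v \<in> carrier_vec m" "v \<noteq> 0\<^sub>v m"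
    and eq: "map_mat complex_of_real M *\<^sub>v v = a \<cdot>\<^sub>v v"
    using ev M unfolding eigenvalue_def eigenvector_def by auto
  have row_eq: "(\<Sum>j<m. complex_of_real (M $$ (i,j)) * v $ j) = a * v $ i" if i: "i < m" for i
    using arg_cong[OF eq, of "\<lambda>w. w $ i"] i M v(1) by (simp add: scalar_prod_def lessThan_atLeast0)
  have Msym: "M $$ (i,j) = M $$ (j,i)" if "i < m" "j < m" for i j
    using arg_cong[OF sym, of "\<lambda>A. A $$ (j,i)"] that M by simp
  txt \<open>The form \<open>v\<^sup>* M v\<close> equals \<open>a \<parallel>v\<parallel>\<^sup>2\<close> and, by symmetry, its own conjugate.\<close>
  define s where "s = (\<Sum>i<m. \<Sum>j<m. cnj (v $ i) * complex_of_real (M $$ (i,j)) * v $ j)"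
  define N where "N = (\<Sum>i<m. (cmod (v $ i))\<^sup>2)"
  have "s = (\<Sum>i<m. cnj (v $ i) * (\<Sum>j<m. complex_of_real (M $$ (i,j)) * v $ j))"
    unfolding s_def by (simp add: sum_distrib_left mult.assoc)
  also have "\<dots> = (\<Sum>i<m. a * (v $ i * cnj (v $ i)))"
    by (rule sum.cong) (auto simp: row_eq)
  also have "\<dots> = a * complex_of_real N"
    unfolding N_def by (simp add: sum_distrib_left complex_norm_square[symmetric] del: of_real_power)
  finally have s_eq: "s = a * complex_of_real N" .
  have "cnj s = (\<Sum>i<m. \<Sum>j<m. v $ i * complex_of_real (M $$ (i,j)) * cnj (v $ j))"
    unfolding s_def by simp
  also have "\<dots> = (\<Sum>j<m. \<Sum>i<m. v $ i * complex_of_real (M $$ (i,j)) * cnj (v $ j))"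
    by (rule sum.swap)
  also have "\<dots> = s" unfolding s_def
    by (intro sum.cong refl) (auto simp: Msym mult.commute mult.left_commute)
  finally have "Im (cnj s) = Im s" by simp
  hence "Im s = 0" by simp
  moreover have "N > 0"
  proof -
    obtain j where j: "j < m" "v $ j \<noteq> 0"
      using v by (metis carrier_vecD eq_vecI index_zero_vec)
    have "0 < (cmod (v $ j))\<^sup>2" using j by simp
    also have "\<dots> \<le> N" unfolding N_def by (rule member_le_sum) (use j in auto)
    finally show ?thesis .
  qed
  ultimately show ?thesis using s_eq by simp
qed

lemma real_symmetric_eigenvalue_exists:
  fixes M :: "real mat"
  assumes M: "M \<in> carrier_mat m m" and sym: "M\<^sup>T = M" and m: "m > 0"
  obtains r where "eigenvalue M r"
proof -
  have C: "map_mat complex_of_real M \<in> carrier_mat m m" using M by simp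
  obtain a where a: "eigenvalue (map_mat complex_of_real M) a"
    using spectrum_non_empty[OF C m] unfolding spectrum_def by auto
  hence "a = complex_of_real (Re a)"
    using complexified_symmetric_eigenvalue_real[OF M sym] by (simp add: complex_eq_iff)
  thus ?thesis using a eigenvalue_of_complexified_eigenvalue[OF M, of "Re a"] that by simp
qed

lemma carrier_submatrix:
  assumes "A \<in> carrier_mat r c" "I \<subseteq> {0..<r}" "J \<subseteq> {0..<c}"
  shows "submatrix A I J \<in> carrier_mat (card I) (card J)"
proof -
  have "{i. i < r \<and> i \<in> I} = I" "{j. j < c \<and> j \<in> J} = J" using assms by auto
  thus ?thesis using assms unfolding submatrix_def by auto
qed

lemma index_submatrix_subset:
  assumes "A \<in> carrier_mat r c" "I \<subseteq> {0..<r}" "J \<subseteq> {0..<c}" "i < card I" "j < card J"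
  shows "submatrix A I J $$ (i,j) = A $$ (pick I i, pick J j)"
proof -
  have "{i. i < r \<and> i \<in> I} = I" "{j. j < c \<and> j \<in> J} = J" using assms by auto
  thus ?thesis using assms by (intro submatrix_index) auto
qed

lemma transpose_submatrix:
  assumes A: "A \<in> carrier_mat r c" and I: "I \<subseteq> {0..<r}" and J: "J \<subseteq> {0..<c}"
  shows "(submatrix A I J)\<^sup>T = submatrix A\<^sup>T J I"
proof -
  have AT: "A\<^sup>T \<in> carrier_mat c r" using A by simp
  show ?thesis
  proof (rule eq_matI)
    fix i j assume "i < dim_row (submatrix A\<^sup>T J I)" "j < dim_col (submatrix A\<^sup>T J I)"
    hence ij: "i < card J" "j < card I" using carrier_submatrix[OF AT J I] by simp_all
    have "pick J i < c" "pick I j < r" using pick_in_set_le ij I J by fastforce+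
    thus "(submatrix A I J)\<^sup>T $$ (i, j) = submatrix A\<^sup>T J I $$ (i, j)"
      using ij carrier_submatrix[OF A I J] A
      by (simp add: index_submatrix_subset[OF A I J] index_submatrix_subset[OF AT J I])
  qed (use carrier_submatrix[OF A I J] carrier_submatrix[OF AT J I] in simp_all)
qed

lemma pick_inj_on: "inj_on (pick I) {..<card I}"
proof (rule inj_onI)
  fix i j assume "i \<in> {..<card I}" "j \<in> {..<card I}" "pick I i = pick I j"
  thus "i = j" using pick_mono_le[of i I j] pick_mono_le[of j I i] by (cases i j rule: linorder_cases) auto
qed

lemma carrier_subvec:
  assumes "v \<in> carrier_vec p" "I \<subseteq> {0..<p}"
  shows "subvec v I \<in> carrier_vec (card I)"
proof -
  have "{i. i < p \<and> i \<in> I} = I" using assms by auto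
  thus ?thesis using assms unfolding subvec_def by auto
qed

lemma index_subvec:
  assumes "v \<in> carrier_vec p" "I \<subseteq> {0..<p}" "i < card I"
  shows "subvec v I $ i = v $ pick I i"
proof -
  have "{i. i < p \<and> i \<in> I} = I" using assms by auto
  thus ?thesis using assms unfolding subvec_def by auto
qed

lemma subvec_all: "subvec v {0..<dim_vec v} = v"
proof -
  have "pick {0..<dim_vec v} i = i" if "i < dim_vec v" for i
    using pick_card_in_set[of i "{0..<dim_vec v}"] that
    by (simp add: Collect_conj_eq Int_absorb1 atLeast0LessThan lessThan_def subset_eq)
  thus ?thesis unfolding subvec_def by (intro eq_vecI) auto
qed

lemma norminf_subvec_le:
  assumes v: "v \<in> carrier_vec p" and I: "I \<subseteq> {0..<p}" and c: "0 \<le> c"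
    and bound: "\<And>i. i \<in> I \<Longrightarrow> \<bar>v $ i\<bar> \<le> c"
  shows "norminf_vec (subvec v I) \<le> c"
proof (rule norminf_vec_leI[OF c])
  fix i assume "i < dim_vec (subvec v I)"
  hence i: "i < card I" using carrier_subvec[OF v I] by simp
  thus "\<bar>subvec v I $ i\<bar> \<le> c"
    using index_subvec[OF v I i] bound[OF pick_in_set_le[OF i]] by simp
qed

section \<open>Blocks of a near-identity matrix\<close>

lemma near_identity_submatrix:
  assumes A: "near_identity_mat A p g" and T: "T \<subseteq> {0..<p}"
  shows "near_identity_mat (submatrix A T T) (card T) g"
  unfolding near_identity_mat_def
proof (intro conjI allI impI)
  note Ac = near_identityD(2)[OF A]
  show "0 \<le> g" by (rule near_identityD(1)[OF A])
  show "submatrix A T T \<in> carrier_mat (card T) (card T)" by (rule carrier_submatrix[OF Ac T T])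
  fix i assume i: "i < card T"
  have pi: "pick T i < p" using pick_in_set_le[OF i] T by auto
  show "submatrix A T T $$ (i, i) = 1"
    using index_submatrix_subset[OF Ac T T i i] near_identityD(3)[OF A pi] by simp
  fix j assume j: "j < card T" and ij: "i \<noteq> j"
  have "pick T j < p" using pick_in_set_le[OF j] T by auto
  moreover have "pick T i \<noteq> pick T j" using inj_on_contraD[OF pick_inj_on ij] i j by simp
  ultimately show "\<bar>submatrix A T T $$ (i, j)\<bar> \<le> g"
    using index_submatrix_subset[OF Ac T T i j] near_identityD(4)[OF A pi] by simp
qed

lemma near_identity_submatrix_disjoint_entry:
  assumes A: "near_identity_mat A p g" and I: "I \<subseteq> {0..<p}" and J: "J \<subseteq> {0..<p}"
    and disj: "I \<inter> J = {}" and i: "i < card I" and j: "j < card J"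
  shows "\<bar>submatrix A I J $$ (i, j)\<bar> \<le> g"
proof -
  have "pick I i \<in> I" "pick J j \<in> J" using pick_in_set_le i j by auto
  hence "pick I i < p" "pick J j < p" "pick I i \<noteq> pick J j" using I J disj by auto
  thus ?thesis
    using index_submatrix_subset[OF near_identityD(2)[OF A] I J i j] near_identityD(4)[OF A] by simp
qed

lemma near_identity_norm1_subvec_col:
  assumes A: "near_identity_mat A p g" and T: "T \<subseteq> {0..<p}" and j: "j < p" "j \<notin> T"
  shows "norm1_vec (subvec (col A j) T) \<le> real (card T) * g"
proof -
  note Ac = near_identityD(2)[OF A]
  have cj: "col A j \<in> carrier_vec p" using Ac by (simp add: carrier_vecI)
  have "norm1_vec (subvec (col A j) T) = (\<Sum>i<card T. \<bar>subvec (col A j) T $ i\<bar>)"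
    using carrier_subvec[OF cj T] by (simp add: norm1_vec_def)
  also have "\<dots> = (\<Sum>i<card T. \<bar>A $$ (pick T i, j)\<bar>)"
  proof (rule sum.cong)
    fix i assume "i \<in> {..<card T}"
    hence i: "i < card T" by simp
    hence "pick T i < p" using pick_in_set_le T by fastforce
    thus "\<bar>subvec (col A j) T $ i\<bar> = \<bar>A $$ (pick T i, j)\<bar>"
      using index_subvec[OF cj T i] Ac j by simp
  qed simp
  also have "\<dots> \<le> (\<Sum>i<card T. g)"
  proof (rule sum_mono)
    fix i assume "i \<in> {..<card T}"
    hence "pick T i \<in> T" using pick_in_set_le by simp
    hence "pick T i < p" "pick T i \<noteq> j" using T j by auto
    thus "\<bar>A $$ (pick T i, j)\<bar> \<le> g" using near_identityD(4)[OF A _ j(1)] by simp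
  qed
  finally show ?thesis by simp
qed

lemma symmetric_near_identity_eigenvalue_bounds:
  assumes M: "near_identity_mat M m g" and sym: "M\<^sup>T = M" and m: "m > 0"
  shows "1 - real m * g \<le> lambda_min M" "lambda_max M \<le> 1 + real m * g"
proof -
  let ?E = "{x. eigenvalue M x}"
  note Mc = near_identityD(2)[OF M]
  have fin: "finite ?E" using card_finite_spectrum(1)[OF Mc] unfolding spectrum_def .
  have ne: "?E \<noteq> {}" using real_symmetric_eigenvalue_exists[OF Mc sym m] by blast
  have "\<bar>x - 1\<bar> \<le> real m * g" if "x \<in> ?E" for x
    using near_identity_eigenvalue_bound[OF M] that by simp
  hence "\<bar>Min ?E - 1\<bar> \<le> real m * g" "\<bar>Max ?E - 1\<bar> \<le> real m * g"
    using Min_in[OF fin ne] Max_in[OF fin ne] by simp_all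
  thus "1 - real m * g \<le> lambda_min M" "lambda_max M \<le> 1 + real m * g"
    unfolding lambda_min_def lambda_max_def by (simp_all add: abs_le_iff)
qed

lemma symmetric_near_identity_submatrix_eigenvalue_bounds:
  assumes A: "near_identity_mat A p g" and sym: "A\<^sup>T = A" and T: "T \<subseteq> {0..<p}" "T \<noteq> {}"
  shows "1 - real (card T) * g \<le> lambda_min (submatrix A T T)"
    "lambda_max (submatrix A T T) \<le> 1 + real (card T) * g"
proof -
  have "(submatrix A T T)\<^sup>T = submatrix A T T"
    using transpose_submatrix[OF near_identityD(2)[OF A] T(1) T(1)] sym by simp
  moreover have "card T > 0" using T finite_subset[OF T(1)] by (simp add: card_gt_0_iff)
  ultimately show "1 - real (card T) * g \<le> lambda_min (submatrix A T T)"
    "lambda_max (submatrix A T T) \<le> 1 + real (card T) * g"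
    using symmetric_near_identity_eigenvalue_bounds[OF near_identity_submatrix[OF A T(1)]] by simp_all
qed

lemma near_identity_norm1_inv_submatrix_col:
  assumes A: "near_identity_mat A p g" and T: "T \<subseteq> {0..<p}" and small: "real (card T) * g \<le> 1/2"
    and j: "j < p" "j \<notin> T"
  shows "norm1_vec (mat_inv (submatrix A T T) *\<^sub>v subvec (col A j) T) \<le> 2 * (real (card T) * g)"
proof -
  have "col A j \<in> carrier_vec p" using near_identityD(2)[OF A] by (simp add: carrier_vecI)
  hence "subvec (col A j) T \<in> carrier_vec (card T)" using carrier_subvec T by blast
  hence "norm1_vec (mat_inv (submatrix A T T) *\<^sub>v subvec (col A j) T) \<le> 2 * norm1_vec (subvec (col A j) T)"
    by (rule near_identity_norm1_mat_inv_mult_vec[OF near_identity_submatrix[OF A T] small])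
  thus ?thesis using near_identity_norm1_subvec_col[OF A T j] by simp
qed

lemma near_identity_norminf_inv_submatrix_mult_vec:
  assumes A: "near_identity_mat A p g" and S: "S \<subseteq> {0..<p}" and S': "S' \<subseteq> {0..<p}"
    and disj: "S \<inter> S' = {}" and small: "real (card S) * g \<le> 1/2" and b: "b \<in> carrier_vec (card S')"
  shows "norminf_vec (mat_inv (submatrix A S S) *\<^sub>v (submatrix A S S' *\<^sub>v b)) \<le> 2 * (g * norm1_vec b)"
proof -
  have D: "submatrix A S S' \<in> carrier_mat (card S) (card S')"
    by (rule carrier_submatrix[OF near_identityD(2)[OF A] S S'])
  have "norminf_vec (submatrix A S S' *\<^sub>v b) \<le> g * norm1_vec b"
    by (rule norminf_mult_mat_vec_le[OF D near_identity_submatrix_disjoint_entry[OF A S S' disj]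
          near_identityD(1)[OF A] b])
  moreover have "norminf_vec (mat_inv (submatrix A S S) *\<^sub>v (submatrix A S S' *\<^sub>v b))
      \<le> 2 * norminf_vec (submatrix A S S' *\<^sub>v b)"
    using near_identity_norminf_mat_inv_mult_vec[OF near_identity_submatrix[OF A S] small] D b by simp
  ultimately show ?thesis by simp
qed

lemma near_identity_norminf_schur_complement_mult_vec:
  assumes A: "near_identity_mat A p g" and S: "S \<subseteq> {0..<p}" and S': "S' \<subseteq> {0..<p}"
    and disj: "S \<inter> S' = {}" and small: "real (card S) * g \<le> 1/2" and b: "b \<in> carrier_vec (card S')"
  shows "norminf_vec ((submatrix A S' S' - submatrix A S' S * mat_inv (submatrix A S S) * submatrix A S S')
            *\<^sub>v b) \<le> norminf_vec b + (1 + 2 * (real (card S) * g)) * (g * norm1_vec b)"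
proof -
  note Ac = near_identityD(2)[OF A] and g = near_identityD(1)[OF A]
  let ?M = "submatrix A S S" and ?D = "submatrix A S S'" and ?B = "submatrix A S' S"
  let ?C = "mat_inv ?M"
  define w where "w = ?C *\<^sub>v (?D *\<^sub>v b)"
  have M: "?M \<in> carrier_mat (card S) (card S)" by (rule carrier_submatrix[OF Ac S S])
  have D: "?D \<in> carrier_mat (card S) (card S')" by (rule carrier_submatrix[OF Ac S S'])
  have B: "?B \<in> carrier_mat (card S') (card S)" by (rule carrier_submatrix[OF Ac S' S])
  have A': "submatrix A S' S' \<in> carrier_mat (card S') (card S')" by (rule carrier_submatrix[OF Ac S' S'])
  have C: "?C \<in> carrier_mat (card S) (card S)"
    using mat_inv_correct(1)[OF M near_identity_det_nonzero[OF near_identity_submatrix[OF A S]]] small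
    by simp
  have w: "w \<in> carrier_vec (card S)" unfolding w_def using C D b by simp
  have "(?B * ?C * ?D) *\<^sub>v b = ?B *\<^sub>v w"
    unfolding w_def using assoc_mult_mat_vec[OF mult_carrier_mat[OF B C] D b]
      assoc_mult_mat_vec[OF B C mult_mat_vec_carrier[OF D b]] by simp
  hence "(submatrix A S' S' - ?B * ?C * ?D) *\<^sub>v b = submatrix A S' S' *\<^sub>v b - ?B *\<^sub>v w"
    using minus_mult_distrib_mat_vec[OF A' _ b, of "?B * ?C * ?D"] B C D by simp
  also have "norminf_vec \<dots> \<le> norminf_vec (submatrix A S' S' *\<^sub>v b) + norminf_vec (?B *\<^sub>v w)"
    by (rule norminf_vec_diff_le) (use A' B b w in simp)
  also have "norminf_vec (submatrix A S' S' *\<^sub>v b) \<le> norminf_vec b + g * norm1_vec b"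
    by (rule near_identity_norminf_mult_vec_le[OF near_identity_submatrix[OF A S'] b])
  also have "norminf_vec (?B *\<^sub>v w) \<le> g * norm1_vec w"
    by (rule norminf_mult_mat_vec_le[OF B near_identity_submatrix_disjoint_entry[OF A S' S] g w])
      (use disj in auto)
  also have "\<dots> \<le> g * (real (card S) * (2 * (g * norm1_vec b)))"
  proof -
    have "norminf_vec w \<le> 2 * (g * norm1_vec b)"
      unfolding w_def by (rule near_identity_norminf_inv_submatrix_mult_vec[OF A S S' disj small b])
    hence "real (card S) * norminf_vec w \<le> real (card S) * (2 * (g * norm1_vec b))"
      by (rule mult_left_mono) simp
    hence "norm1_vec w \<le> real (card S) * (2 * (g * norm1_vec b))"
      using norm1_vec_le_norminf_vec[of w] w by simp
    thus ?thesis using g by (rule mult_left_mono)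
  qed
  finally show ?thesis by (simp add: algebra_simps)
qed

theorem lemma1:
  fixes \<Sigma> :: "real mat" and \<beta> :: "real vec" and p n kbar :: nat
    and \<sigma> \<nu> \<omega>0 \<eta> :: real
  defines "\<mu> \<equiv> sqrt (2 * ln (real p) / real n)"
  defines "S \<equiv> {j. j < p \<and> \<bar>\<beta> $ j\<bar> > \<sigma> * \<nu> * \<mu>}"
  defines "Sc \<equiv> {0..<p} - S"
  defines "k \<equiv> card S"
  defines "\<eta>bar \<equiv> \<eta> / real kbar"
  assumes pd: "pos_def_mat \<Sigma> p"
    and diag: "\<forall>j<p. \<Sigma> $$ (j, j) = 1"
    and beta: "\<beta> \<in> carrier_vec p"
    and sigma: "\<sigma> > 0" and nu: "\<nu> \<ge> 0" and n: "n \<ge> 1"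
    and kbar: "kbar \<ge> 1" "k \<le> kbar"
    and omega: "0 \<le> \<omega>0" "\<omega>0 < 1"
    and gamma: "\<forall>j<p. \<forall>j'<p. j \<noteq> j' \<longrightarrow> \<bar>\<Sigma> $$ (j, j')\<bar> \<le> \<omega>0 / (2 * real kbar)"
    and eta: "\<eta> \<ge> 0" "norm1_vec (subvec \<beta> Sc) \<le> \<sigma> * \<eta> * \<mu>"
  shows
    "(1 \<le> k \<longrightarrow>
       (\<forall>T. T \<subseteq> {0..<p} \<and> card T = k \<longrightarrow>
           lambda_min (submatrix \<Sigma> T T) \<ge> 1 - \<omega>0 / 2 \<and>
           lambda_max (submatrix \<Sigma> T T) \<le> 1 + \<omega>0 / 2) \<and>
       (\<forall>T. T \<subseteq> {0..<p} \<and> card T = k \<longrightarrow>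
           (\<forall>j<p. j \<notin> T \<longrightarrow>
              norm1_vec (mat_inv (submatrix \<Sigma> T T) *\<^sub>v subvec (col \<Sigma> j) T) \<le> \<omega>0)) \<and>
       norminf_vec (mat_inv (submatrix \<Sigma> S S) *\<^sub>v (submatrix \<Sigma> S Sc *\<^sub>v subvec \<beta> Sc))
          \<le> \<sigma> * \<omega>0 * \<eta>bar * \<mu> \<and>
       norminf_vec ((submatrix \<Sigma> Sc Sc - submatrix \<Sigma> Sc S * mat_inv (submatrix \<Sigma> S S) * submatrix \<Sigma> S Sc)
                      *\<^sub>v subvec \<beta> Sc)
          \<le> \<sigma> * (\<nu> + \<omega>0 * \<eta>bar) * \<mu>)
     \<and> (k = 0 \<longrightarrow> norminf_vec (\<Sigma> *\<^sub>v \<beta>) \<le> \<sigma> * (\<nu> + \<omega>0 * \<eta>bar) * \<mu>)"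
proof -
  define g where "g = \<omega>0 / (2 * real kbar)"
  have \<Sigma>: "near_identity_mat \<Sigma> p g"
    using pd diag gamma omega kbar unfolding near_identity_mat_def pos_def_mat_def g_def by auto
  have sym: "\<Sigma>\<^sup>T = \<Sigma>" using pd unfolding pos_def_mat_def by simp
  have kg: "real k * g \<le> \<omega>0 / 2"
    using kbar omega mult_right_mono[of "real k" "real kbar" "\<omega>0 / (2 * real kbar)"]
    unfolding g_def by simp
  have small: "real (card S) * g \<le> 1/2" using kg omega unfolding k_def by simp
  have S: "S \<subseteq> {0..<p}" "Sc \<subseteq> {0..<p}" "S \<inter> Sc = {}" unfolding S_def Sc_def by auto
  define b where "b = subvec \<beta> Sc"
  have b: "b \<in> carrier_vec (card Sc)" unfolding b_def by (rule carrier_subvec[OF beta S(2)])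
  have "\<mu> \<ge> 0" unfolding \<mu>_def by (cases "p = 0") auto
  hence b_inf: "norminf_vec b \<le> \<sigma> * \<nu> * \<mu>"
    unfolding b_def using sigma nu
    by (intro norminf_subvec_le[OF beta S(2)]) (auto simp: Sc_def S_def)
  have g: "0 \<le> g" by (rule near_identityD(1)[OF \<Sigma>])
  have gN_eq: "2 * (g * (\<sigma> * \<eta> * \<mu>)) = \<sigma> * \<omega>0 * \<eta>bar * \<mu>"
    using kbar unfolding g_def \<eta>bar_def by (simp add: field_simps)
  have gN: "0 \<le> g * norm1_vec b" "2 * (g * norm1_vec b) \<le> \<sigma> * \<omega>0 * \<eta>bar * \<mu>"
    using g norm1_vec_nonneg[of b] mult_left_mono[OF eta(2)[folded b_def] g]
    by (simp_all only: gN_eq[symmetric]) simp_all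
  have bound: "\<sigma> * \<nu> * \<mu> + \<sigma> * \<omega>0 * \<eta>bar * \<mu> = \<sigma> * (\<nu> + \<omega>0 * \<eta>bar) * \<mu>"
    by (simp add: algebra_simps)
  show ?thesis
  proof (intro conjI impI allI)
    fix T assume T: "T \<subseteq> {0..<p} \<and> card T = k" and "1 \<le> k"
    hence "T \<noteq> {}" by auto
    hence "1 - real k * g \<le> lambda_min (submatrix \<Sigma> T T)" "lambda_max (submatrix \<Sigma> T T) \<le> 1 + real k * g"
      using symmetric_near_identity_submatrix_eigenvalue_bounds[OF \<Sigma> sym, of T] T by simp_all
    thus "1 - \<omega>0 / 2 \<le> lambda_min (submatrix \<Sigma> T T)" "lambda_max (submatrix \<Sigma> T T) \<le> 1 + \<omega>0 / 2"
      using kg by linarith+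
  next
    fix T j assume T: "T \<subseteq> {0..<p} \<and> card T = k" and j: "j < p" "j \<notin> T"
    hence "norm1_vec (mat_inv (submatrix \<Sigma> T T) *\<^sub>v subvec (col \<Sigma> j) T) \<le> 2 * (real k * g)"
      using near_identity_norm1_inv_submatrix_col[OF \<Sigma> _ _ j] kg omega by simp
    thus "norm1_vec (mat_inv (submatrix \<Sigma> T T) *\<^sub>v subvec (col \<Sigma> j) T) \<le> \<omega>0"
      using kg by linarith
  next
    show "norminf_vec (mat_inv (submatrix \<Sigma> S S) *\<^sub>v (submatrix \<Sigma> S Sc *\<^sub>v subvec \<beta> Sc))
        \<le> \<sigma> * \<omega>0 * \<eta>bar * \<mu>"
      using near_identity_norminf_inv_submatrix_mult_vec[OF \<Sigma> S small b] kg omega gN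
      unfolding b_def k_def by simp
  next
    have "norminf_vec b + (1 + 2 * (real k * g)) * (g * norm1_vec b) \<le> \<sigma> * \<nu> * \<mu> + 2 * (g * norm1_vec b)"
      using b_inf kg omega gN(1) mult_right_mono[of "1 + 2 * (real k * g)" 2 "g * norm1_vec b"] by simp
    thus "norminf_vec ((submatrix \<Sigma> Sc Sc - submatrix \<Sigma> Sc S * mat_inv (submatrix \<Sigma> S S) * submatrix \<Sigma> S Sc)
        *\<^sub>v subvec \<beta> Sc) \<le> \<sigma> * (\<nu> + \<omega>0 * \<eta>bar) * \<mu>"
      using near_identity_norminf_schur_complement_mult_vec[OF \<Sigma> S small b] kg omega gN bound
      unfolding b_def k_def by simp
  next
    assume "k = 0"
    hence "S = {}" unfolding k_def using finite_subset[OF S(1)] by simp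
    hence "b = \<beta>" using subvec_all[of \<beta>] beta unfolding b_def Sc_def by simp
    thus "norminf_vec (\<Sigma> *\<^sub>v \<beta>) \<le> \<sigma> * (\<nu> + \<omega>0 * \<eta>bar) * \<mu>"
      using near_identity_norminf_mult_vec_le[OF \<Sigma> beta] b_inf gN bound by simp
  qed
qed

end
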